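(* Let $m\ge 2$ and $0\le c<1$, and consider the best-worst rule $s=(c,m)$. A profile $x=((x^1,n_1),\dots,(x^q,n_q))$ with $q\ge 2$ is a non-convergent Nash equilibrium if and only if all of the following hold, where $I^p:=\ell(I_1^R)$: (i) $n_i\le 2$ for all $i\in[q]$, and $n_1=n_q=2$; (ii) $\ell(I_q^L)=I^p$, and for every $1<i<q$ with $n_i=2$ we have $\ell(I_i^L)=\ell(I_i^R)=I^p$; (iii) $\ell(I_1^L)=\ell(I_q^R)=I^p+\frac{c}{2}$; (iv) for every $i$ with $n_i=1$: $\ell(I_i)\ge \ell(I_k^L)$ for all $k\neq 1$ and $\ell(I_i)\ge \ell(I_k^R)$ for all $k\ne q$; (v) $I^p\ge \ell(I_k^L)$ for all $k\ne 1$ and $I^p\ge \ell(I_k^R)$ for all $k\ne q$.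
   Context: Setting: voters' ideal points are distributed uniformly (unit mass, Lebesgue measure) on $[0,1]$. There are $m$ candidates; a profile is $x=(x_1,\dots,x_m)\in[0,1]^m$. A voter with ideal point $y$ ranks candidates by distance $|x_i-y|$ (closer is better); ties are broken by a fair lottery (uniformly random strict order among tied candidates). Under the best-worst rule $s=(c,m)$ ($c\ge0$), a candidate receives $1$ point from each voter ranking her first, $-c$ from each voter ranking her last ($m$-th), and $0$ otherwise; $v_i(x)$ is candidate $i$'s expected total points. A (pure-strategy Nash) equilibrium is a profile $x^*$ with $v_i(x^* )\ge v_i(t,x^*_{-i})$ for all $i$ and $t\in[0,1]$ ($(t,x_{-i})$ is $x$ with $x_i$ replaced by $t$); it is non-convergent (NCNE) if at least two platforms are distinct. Notation: $[n]=\{1,\dots,n\}$. A profile determines its distinct occupied positions $x^1<x^2<\dots<x^q$, with $n_j$ the number of candidates at $x^j$; we write $x=((x^1,n_1),\dots,(x^q,n_q))$. For an interval $I=[a,b]$, $\ell(I)=b-a$. For $q\ge2$ the full-electorates are $I_1=[0,(x^1+x^2)/2]$, $I_i=[(x^{i-1}+x^i)/2,(x^i+x^{i+1})/2]$ for $2\le i\le q-1$, and $I_q=[(x^{q-1}+x^q)/2,1]$; the half-electorates are $I_i^L=\{y\in I_i: y\le x^i\}$ and $I_i^R=\{y\in I_i:y\ge x^i\}$. *)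

theory Defs
  imports "HOL-Analysis.Analysis"
begin

text \<open>Candidates are indexed by 0,...,m-1; a profile is a function x :: nat => real,
  only its values on {..<m} matter. Voters are uniform on [0,1].\<close>

definition is_profile :: "nat \<Rightarrow> (nat \<Rightarrow> real) \<Rightarrow> bool" where
  "is_profile m x \<longleftrightarrow> (\<forall>i<m. x i \<in> {0..1})"

definition closest :: "nat \<Rightarrow> (nat \<Rightarrow> real) \<Rightarrow> real \<Rightarrow> nat set" where
  "closest m x y = {j. j < m \<and> (\<forall>k<m. \<bar>x j - y\<bar> \<le> \<bar>x k - y\<bar>)}"

definition farthest :: "nat \<Rightarrow> (nat \<Rightarrow> real) \<Rightarrow> real \<Rightarrow> nat set" where
  "farthest m x y = {j. j < m \<and> (\<forall>k<m. \<bar>x k - y\<bar> \<le> \<bar>x j - y\<bar>)}"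

text \<open>Under a fair lottery over strict orders of tied candidates, the probability that i is
  ranked first is 1/|closest| if i is among the closest, and similarly for last place.\<close>
definition prob_first :: "nat \<Rightarrow> (nat \<Rightarrow> real) \<Rightarrow> nat \<Rightarrow> real \<Rightarrow> real" where
  "prob_first m x i y = (if i \<in> closest m x y then 1 / real (card (closest m x y)) else 0)"

definition prob_last :: "nat \<Rightarrow> (nat \<Rightarrow> real) \<Rightarrow> nat \<Rightarrow> real \<Rightarrow> real" where
  "prob_last m x i y = (if i \<in> farthest m x y then 1 / real (card (farthest m x y)) else 0)"

definition bw_score :: "real \<Rightarrow> nat \<Rightarrow> (nat \<Rightarrow> real) \<Rightarrow> nat \<Rightarrow> real \<Rightarrow> real" where
  "bw_score c m x i y = prob_first m x i y - c * prob_last m x i y"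

definition payoff :: "real \<Rightarrow> nat \<Rightarrow> (nat \<Rightarrow> real) \<Rightarrow> nat \<Rightarrow> real" where
  "payoff c m x i = integral {0..1} (bw_score c m x i)"

definition is_NE :: "real \<Rightarrow> nat \<Rightarrow> (nat \<Rightarrow> real) \<Rightarrow> bool" where
  "is_NE c m x \<longleftrightarrow> is_profile m x \<and>
     (\<forall>i<m. \<forall>t\<in>{0..1}. payoff c m (x(i := t)) i \<le> payoff c m x i)"

definition is_NCNE :: "real \<Rightarrow> nat \<Rightarrow> (nat \<Rightarrow> real) \<Rightarrow> bool" where
  "is_NCNE c m x \<longleftrightarrow> is_NE c m x \<and> (\<exists>i<m. \<exists>j<m. x i \<noteq> x j)"

text \<open>Distinct occupied positions x^1 < ... < x^q (1-based) and multiplicities n_k.\<close>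
definition positions :: "nat \<Rightarrow> (nat \<Rightarrow> real) \<Rightarrow> real set" where
  "positions m x = x ` {..<m}"

definition npos :: "nat \<Rightarrow> (nat \<Rightarrow> real) \<Rightarrow> nat" where
  "npos m x = card (positions m x)"

definition pos :: "nat \<Rightarrow> (nat \<Rightarrow> real) \<Rightarrow> nat \<Rightarrow> real" where
  "pos m x k = sorted_list_of_set (positions m x) ! (k - 1)"

definition nmult :: "nat \<Rightarrow> (nat \<Rightarrow> real) \<Rightarrow> nat \<Rightarrow> nat" where
  "nmult m x k = card {i. i < m \<and> x i = pos m x k}"

text \<open>Endpoints of the full-electorate I_k = [lbd k, rbd k] (for q >= 2).\<close>
definition lbd :: "nat \<Rightarrow> (nat \<Rightarrow> real) \<Rightarrow> nat \<Rightarrow> real" where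
  "lbd m x k = (if k = 1 then 0 else (pos m x (k - 1) + pos m x k) / 2)"

definition rbd :: "nat \<Rightarrow> (nat \<Rightarrow> real) \<Rightarrow> nat \<Rightarrow> real" where
  "rbd m x k = (if k = npos m x then 1 else (pos m x k + pos m x (k + 1)) / 2)"

definition lenI :: "nat \<Rightarrow> (nat \<Rightarrow> real) \<Rightarrow> nat \<Rightarrow> real" where
  "lenI m x k = rbd m x k - lbd m x k"

definition lenL :: "nat \<Rightarrow> (nat \<Rightarrow> real) \<Rightarrow> nat \<Rightarrow> real" where
  "lenL m x k = pos m x k - lbd m x k"

definition lenR :: "nat \<Rightarrow> (nat \<Rightarrow> real) \<Rightarrow> nat \<Rightarrow> real" where
  "lenR m x k = rbd m x k - pos m x k"

end

theory Submission
  imports Defs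
begin

text \<open>
  Away from finitely many ties, a voter ranks first the nearest occupied position and last the
  extreme position farther from her, so a candidate's payoff is her share of the full-electorate of
  her position, minus c times her share of the voters on the far side of the midpoint of the two
  extreme positions if she sits at an extreme.

  A candidate who shares her position can jump to the midpoint of any gap and collect
  half of it, so every gap half-length is at most her payoff.  A lone extreme candidate gains by
  stepping towards her neighbour, and a shared extreme one by outflanking the profile.  At a shared
  position, n times the payoff is the sum of the two half-electorates (less the c-term at an extreme),
  each bounded by the payoff through these deviations; hence n = 2 and both parts equal the payoff.
  This yields (i)-(iii), (v) and x^1 + x^q = 1, and a lone candidate jumping into a gap gives (iv).

  Every candidate then earns at least I^p.  Outflanking earns at most I^p; moving into
  a gap between the other candidates earns half of it, and such a gap is either a gap of the profile
  or the full-electorate of a lone candidate, bounded by (v) or (iv); joining an occupied position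
  shares a cell made of two such half-gaps with at least one other candidate.
\<close>

section \<open>Full-electorates of a finite set of positions\<close>

text \<open>For finite A \<subseteq> [0,1] and p \<in> A, the open interval (cell_lo A p, cell_hi A p) is the set of voters
  strictly closer to p than to every other point of A.\<close>

definition cell_lo :: "real set \<Rightarrow> real \<Rightarrow> real" where
  "cell_lo A p = (if \<exists>a\<in>A. a < p then (Max {a\<in>A. a < p} + p) / 2 else 0)"

definition cell_hi :: "real set \<Rightarrow> real \<Rightarrow> real" where
  "cell_hi A p = (if \<exists>a\<in>A. p < a then (p + Min {a\<in>A. p < a}) / 2 else 1)"

lemma cell_lo_eqI:
  assumes "finite A" "a \<in> A" "a < p" "\<And>z. z \<in> A \<Longrightarrow> z < p \<Longrightarrow> z \<le> a"
  shows "cell_lo A p = (a + p) / 2"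
proof -
  have "Max {z\<in>A. z < p} = a" using assms by (intro Max_eqI) auto
  then show ?thesis using assms by (auto simp: cell_lo_def)
qed

lemma cell_hi_eqI:
  assumes "finite A" "b \<in> A" "p < b" "\<And>z. z \<in> A \<Longrightarrow> p < z \<Longrightarrow> b \<le> z"
  shows "cell_hi A p = (p + b) / 2"
proof -
  have "Min {z\<in>A. p < z} = b" using assms by (intro Min_eqI) auto
  then show ?thesis using assms by (auto simp: cell_hi_def)
qed

lemma cell_lo_eq_0: "(\<And>z. z \<in> A \<Longrightarrow> p \<le> z) \<Longrightarrow> cell_lo A p = 0"
  by (force simp: cell_lo_def)

lemma cell_hi_eq_1: "(\<And>z. z \<in> A \<Longrightarrow> z \<le> p) \<Longrightarrow> cell_hi A p = 1"
  by (force simp: cell_hi_def)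

lemma cell_lo_obtain:
  assumes "finite A" "a \<in> A" "a < p"
  obtains u where "u \<in> A" "u < p" "\<And>z. z \<in> A \<Longrightarrow> z < p \<Longrightarrow> z \<le> u" "cell_lo A p = (u + p) / 2"
proof -
  let ?u = "Max {a\<in>A. a < p}"
  have "?u \<in> {a\<in>A. a < p}" using assms by (intro Max_in) auto
  moreover have "\<And>z. z \<in> A \<Longrightarrow> z < p \<Longrightarrow> z \<le> ?u" using assms by (intro Max_ge) auto
  ultimately show ?thesis using assms by (intro that[of ?u]) (auto simp: cell_lo_def)
qed

lemma cell_hi_obtain:
  assumes "finite A" "b \<in> A" "p < b"
  obtains w where "w \<in> A" "p < w" "\<And>z. z \<in> A \<Longrightarrow> p < z \<Longrightarrow> w \<le> z" "cell_hi A p = (p + w) / 2"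
proof -
  let ?w = "Min {a\<in>A. p < a}"
  have "?w \<in> {a\<in>A. p < a}" using assms by (intro Min_in) auto
  moreover have "\<And>z. z \<in> A \<Longrightarrow> p < z \<Longrightarrow> ?w \<le> z" using assms by (intro Min_le) auto
  ultimately show ?thesis using assms by (intro that[of ?w]) (auto simp: cell_hi_def)
qed

lemma cell_bounds:
  assumes "finite A" "A \<subseteq> {0..1}" "p \<in> A"
  shows "0 \<le> cell_lo A p" "cell_lo A p \<le> p" "p \<le> cell_hi A p" "cell_hi A p \<le> 1"
proof -
  have p: "0 \<le> p" "p \<le> 1" using assms by auto
  show "0 \<le> cell_lo A p" "cell_lo A p \<le> p"
  proof (atomize (full), cases "\<exists>a\<in>A. a < p")
    case True
    then obtain a where a: "a \<in> A" "a < p" by blast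
    obtain u where "u \<in> A" "u < p" "\<And>z. z \<in> A \<Longrightarrow> z < p \<Longrightarrow> z \<le> u" "cell_lo A p = (u + p) / 2"
      using cell_lo_obtain[OF assms(1) a] by blast
    then show "0 \<le> cell_lo A p \<and> cell_lo A p \<le> p" using assms(2) by auto
  qed (use p in \<open>auto simp: cell_lo_def\<close>)
  show "p \<le> cell_hi A p" "cell_hi A p \<le> 1"
  proof (atomize (full), cases "\<exists>a\<in>A. p < a")
    case True
    then obtain b where b: "b \<in> A" "p < b" by blast
    obtain w where "w \<in> A" "p < w" "\<And>z. z \<in> A \<Longrightarrow> p < z \<Longrightarrow> w \<le> z" "cell_hi A p = (p + w) / 2"
      using cell_hi_obtain[OF assms(1) b] by blast
    then show "p \<le> cell_hi A p \<and> cell_hi A p \<le> 1" using assms(2) by auto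
  qed (use p in \<open>auto simp: cell_hi_def\<close>)
qed

lemma equidistant_imp_eq_or_midpoint:
  "\<bar>a - y\<bar> = \<bar>b - y\<bar> \<Longrightarrow> a = b \<or> y = (a + b) / 2" for a b y :: real
  by (auto simp: abs_if split: if_splits)

lemma nearest_iff_in_cell:
  fixes A :: "real set"
  assumes fin: "finite A" and y: "0 < y" "y < 1"
    and no_tie: "\<And>a. a \<in> A \<Longrightarrow> a \<noteq> p \<Longrightarrow> y \<noteq> (a + p) / 2"
  shows "(\<forall>a\<in>A. \<bar>p - y\<bar> \<le> \<bar>a - y\<bar>) \<longleftrightarrow> cell_lo A p < y \<and> y < cell_hi A p"
proof
  assume near: "\<forall>a\<in>A. \<bar>p - y\<bar> \<le> \<bar>a - y\<bar>"
  have "cell_lo A p < y"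
  proof (cases "\<exists>a\<in>A. a < p")
    case True
    then obtain a where a: "a \<in> A" "a < p" by blast
    obtain u where u: "u \<in> A" "u < p" "\<And>z. z \<in> A \<Longrightarrow> z < p \<Longrightarrow> z \<le> u" "cell_lo A p = (u + p) / 2"
      using cell_lo_obtain[OF fin a] by blast
    have "\<bar>p - y\<bar> \<le> \<bar>u - y\<bar>" "y \<noteq> (u + p) / 2" using near no_tie u by auto
    then show ?thesis using u(2,4) by (auto simp: abs_if split: if_splits)
  qed (use y in \<open>simp add: cell_lo_def\<close>)
  moreover have "y < cell_hi A p"
  proof (cases "\<exists>a\<in>A. p < a")
    case True
    then obtain b where b: "b \<in> A" "p < b" by blast
    obtain w where w: "w \<in> A" "p < w" "\<And>z. z \<in> A \<Longrightarrow> p < z \<Longrightarrow> w \<le> z" "cell_hi A p = (p + w) / 2"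
      using cell_hi_obtain[OF fin b] by blast
    have "\<bar>p - y\<bar> \<le> \<bar>w - y\<bar>" "y \<noteq> (w + p) / 2" using near no_tie w by auto
    then show ?thesis using w(2,4) by (auto simp: abs_if split: if_splits)
  qed (use y in \<open>simp add: cell_hi_def\<close>)
  ultimately show "cell_lo A p < y \<and> y < cell_hi A p" ..
next
  assume cell: "cell_lo A p < y \<and> y < cell_hi A p"
  show "\<forall>a\<in>A. \<bar>p - y\<bar> \<le> \<bar>a - y\<bar>"
  proof
    fix a assume a: "a \<in> A"
    consider "a < p" | "a = p" | "p < a" by linarith
    then show "\<bar>p - y\<bar> \<le> \<bar>a - y\<bar>"
    proof cases
      case 1
      obtain u where "u \<in> A" "u < p" "\<And>z. z \<in> A \<Longrightarrow> z < p \<Longrightarrow> z \<le> u" "cell_lo A p = (u + p) / 2"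
        using cell_lo_obtain[OF fin a 1] by blast
      then have "a \<le> u" "u < p" "cell_lo A p = (u + p) / 2" using a 1 by auto
      then show ?thesis using cell 1 by (auto simp: abs_if)
    next
      case 3
      obtain w where "w \<in> A" "p < w" "\<And>z. z \<in> A \<Longrightarrow> p < z \<Longrightarrow> w \<le> z" "cell_hi A p = (p + w) / 2"
        using cell_hi_obtain[OF fin a 3] by blast
      then have "w \<le> a" "p < w" "cell_hi A p = (p + w) / 2" using a 3 by auto
      then show ?thesis using cell 3 by (auto simp: abs_if)
    qed simp
  qed
qed

lemma farthest_iff_extreme:
  fixes A :: "real set"
  assumes fin: "finite A" and p: "p \<in> A" and spread: "Min A < Max A"
    and no_tie: "y \<noteq> (Min A + Max A) / 2"
  shows "(\<forall>a\<in>A. \<bar>a - y\<bar> \<le> \<bar>p - y\<bar>) \<longleftrightarrow>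
     (p = Min A \<and> (Min A + Max A) / 2 < y) \<or> (p = Max A \<and> y < (Min A + Max A) / 2)"
proof -
  have ext: "Min A \<in> A" "Max A \<in> A" using fin p by (auto intro!: Min_in Max_in)
  have bnd: "Min A \<le> a \<and> a \<le> Max A" if "a \<in> A" for a using fin that by auto
  show ?thesis
  proof
    assume "\<forall>a\<in>A. \<bar>a - y\<bar> \<le> \<bar>p - y\<bar>"
    then have "\<bar>Min A - y\<bar> \<le> \<bar>p - y\<bar>" "\<bar>Max A - y\<bar> \<le> \<bar>p - y\<bar>" using ext by auto
    moreover have "Min A \<le> p" "p \<le> Max A" using bnd p by auto
    ultimately show "(p = Min A \<and> (Min A + Max A) / 2 < y) \<or> (p = Max A \<and> y < (Min A + Max A) / 2)"
      using spread no_tie by (auto simp: abs_if split: if_splits)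
  next
    assume H: "(p = Min A \<and> (Min A + Max A) / 2 < y) \<or> (p = Max A \<and> y < (Min A + Max A) / 2)"
    show "\<forall>a\<in>A. \<bar>a - y\<bar> \<le> \<bar>p - y\<bar>"
    proof
      fix a assume "a \<in> A"
      then have "Min A \<le> a" "a \<le> Max A" using bnd by auto
      then show "\<bar>a - y\<bar> \<le> \<bar>p - y\<bar>" using H by (auto simp: abs_if)
    qed
  qed
qed

section \<open>The payoff of a candidate\<close>

text \<open>Voters equidistant from two positions, and the endpoints: a finite, hence negligible, set.\<close>

definition tie_points :: "real set \<Rightarrow> real set" where
  "tie_points A = {0, 1} \<union> (\<lambda>(a, b). (a + b) / 2) ` (A \<times> A)"

lemma midpoint_in_tie_points: "a \<in> A \<Longrightarrow> b \<in> A \<Longrightarrow> (a + b) / 2 \<in> tie_points A"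
  unfolding tie_points_def by (rule UnI2, rule image_eqI[where x="(a, b)"]) auto

lemma finite_tie_points: "finite A \<Longrightarrow> finite (tie_points A)"
  by (simp add: tie_points_def)

definition mult_at :: "nat \<Rightarrow> (nat \<Rightarrow> real) \<Rightarrow> real \<Rightarrow> nat" where
  "mult_at m x p = card {j. j < m \<and> x j = p}"

text \<open>For at least two positions, the voters beyond the midpoint of the extremes rank the opposite
  extreme last.\<close>

definition last_mass :: "real set \<Rightarrow> real \<Rightarrow> real" where
  "last_mass A p =
     (if p = Min A then 1 - (Min A + Max A) / 2 else if p = Max A then (Min A + Max A) / 2 else 0)"

lemma tied_set_eq:
  fixes x :: "nat \<Rightarrow> real"
  assumes "i < m" and y: "\<And>a b. a \<in> x ` {..<m} \<Longrightarrow> b \<in> x ` {..<m} \<Longrightarrow> y \<noteq> (a + b) / 2"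
    and "i \<in> S" and S: "\<And>j. j \<in> S \<Longrightarrow> j < m \<and> \<bar>x j - y\<bar> = \<bar>x i - y\<bar>"
    and "\<And>j. j < m \<Longrightarrow> x j = x i \<Longrightarrow> j \<in> S"
  shows "S = {j. j < m \<and> x j = x i}"
proof -
  have "x j = x i" if "j \<in> S" for j
    using S[OF that] equidistant_imp_eq_or_midpoint[of "x j" y "x i"] y[of "x j" "x i"] assms(1)
    by auto
  then show ?thesis using assms(5) S by blast
qed

lemma prob_first_eq:
  assumes i: "i < m" and y: "y \<in> {0..1} - tie_points (x ` {..<m})"
  shows "prob_first m x i y =
    (if cell_lo (x ` {..<m}) (x i) < y \<and> y < cell_hi (x ` {..<m}) (x i)
     then 1 / real (mult_at m x (x i)) else 0)"
proof -
  let ?A = "x ` {..<m}"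
  have y01: "0 < y" "y < 1" using y by (auto simp: tie_points_def)
  have no_tie: "y \<noteq> (a + b) / 2" if "a \<in> ?A" "b \<in> ?A" for a b
    using y midpoint_in_tie_points[OF that] by blast
  have "i \<in> closest m x y \<longleftrightarrow> (\<forall>a\<in>?A. \<bar>x i - y\<bar> \<le> \<bar>a - y\<bar>)"
    using i by (auto simp: closest_def)
  also have "\<dots> \<longleftrightarrow> cell_lo ?A (x i) < y \<and> y < cell_hi ?A (x i)"
    by (rule nearest_iff_in_cell) (use y01 no_tie i in auto)
  finally have iff: "i \<in> closest m x y \<longleftrightarrow> cell_lo ?A (x i) < y \<and> y < cell_hi ?A (x i)" .
  have "closest m x y = {j. j < m \<and> x j = x i}" if "i \<in> closest m x y"
    by (rule tied_set_eq[OF i no_tie that]) (use that in \<open>auto simp: closest_def intro: antisym\<close>)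
  then show ?thesis using iff by (auto simp: prob_first_def mult_at_def)
qed

lemma prob_last_eq:
  assumes i: "i < m" and y: "y \<in> {0..1} - tie_points (x ` {..<m})"
    and spread: "Min (x ` {..<m}) < Max (x ` {..<m})"
  shows "prob_last m x i y =
    (if (x i = Min (x ` {..<m}) \<and> (Min (x ` {..<m}) + Max (x ` {..<m})) / 2 < y) \<or>
        (x i = Max (x ` {..<m}) \<and> y < (Min (x ` {..<m}) + Max (x ` {..<m})) / 2)
     then 1 / real (mult_at m x (x i)) else 0)"
proof -
  let ?A = "x ` {..<m}"
  have no_tie: "y \<noteq> (a + b) / 2" if "a \<in> ?A" "b \<in> ?A" for a b
    using y midpoint_in_tie_points[OF that] by blast
  have ext: "Min ?A \<in> ?A" "Max ?A \<in> ?A" using i by (auto intro!: Min_in Max_in)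
  have "i \<in> farthest m x y \<longleftrightarrow> (\<forall>a\<in>?A. \<bar>a - y\<bar> \<le> \<bar>x i - y\<bar>)"
    using i by (auto simp: farthest_def)
  also have "\<dots> \<longleftrightarrow> (x i = Min ?A \<and> (Min ?A + Max ?A) / 2 < y) \<or> (x i = Max ?A \<and> y < (Min ?A + Max ?A) / 2)"
    by (rule farthest_iff_extreme[OF _ _ spread]) (use i no_tie[OF ext] in auto)
  finally have iff: "i \<in> farthest m x y \<longleftrightarrow>
      (x i = Min ?A \<and> (Min ?A + Max ?A) / 2 < y) \<or> (x i = Max ?A \<and> y < (Min ?A + Max ?A) / 2)" .
  have "farthest m x y = {j. j < m \<and> x j = x i}" if "i \<in> farthest m x y"
    by (rule tied_set_eq[OF i no_tie that]) (use that in \<open>auto simp: farthest_def intro: antisym\<close>)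
  then show ?thesis using iff by (auto simp: prob_last_def mult_at_def)
qed

lemma has_integral_interval_indicator:
  fixes a b k :: real
  assumes "0 \<le> a" "a \<le> b" "b \<le> 1"
  shows "((\<lambda>y. if a < y \<and> y < b then k else 0) has_integral k * (b - a)) {0..1}"
proof -
  have "((\<lambda>y. k) has_integral k * (b - a)) {a..b}"
    using has_integral_const_real[of k a b] assms by (simp add: mult.commute)
  then have "((\<lambda>y. if y \<in> cbox a b then k else 0) has_integral k * (b - a)) (cbox 0 1)"
    by (intro has_integral_restrict_closed_subinterval) (use assms in auto)
  then have h: "((\<lambda>y. if y \<in> {a..b} then k else 0) has_integral k * (b - a)) {0..1}" by simp
  show ?thesis
    by (rule has_integral_spike_finite[OF _ _ h, of "{a, b}"]) auto
qed

lemma payoff_eq_cell: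
  assumes prof: "is_profile m x" and i: "i < m" and spread: "Min (x ` {..<m}) < Max (x ` {..<m})"
  shows "payoff c m x i = (cell_hi (x ` {..<m}) (x i) - cell_lo (x ` {..<m}) (x i)
           - c * last_mass (x ` {..<m}) (x i)) / real (mult_at m x (x i))"
proof -
  let ?A = "x ` {..<m}"
  define n where "n = real (mult_at m x (x i))"
  define lo where "lo = cell_lo ?A (x i)"
  define hi where "hi = cell_hi ?A (x i)"
  define mid where "mid = (Min ?A + Max ?A) / 2"
  define lo' where "lo' = (if x i = Min ?A then mid else 0)"
  define hi' where "hi' = (if x i = Min ?A then 1 else if x i = Max ?A then mid else 0)"
  have sub: "?A \<subseteq> {0..1}" using prof by (auto simp: is_profile_def)
  have cell: "0 \<le> lo" "lo \<le> hi" "hi \<le> 1"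
    using cell_bounds[OF _ sub, of "x i"] i unfolding lo_def hi_def by force+
  have "Min ?A \<in> ?A" "Max ?A \<in> ?A" using i by (auto intro!: Min_in Max_in)
  then have "Min ?A \<in> {0..1}" "Max ?A \<in> {0..1}" using sub by blast+
  then have "0 \<le> mid" "mid \<le> 1" unfolding mid_def by auto
  then have last: "0 \<le> lo'" "lo' \<le> hi'" "hi' \<le> 1" unfolding lo'_def hi'_def by auto
  define g where
    "g y = (if lo < y \<and> y < hi then 1 / n else 0) - c * (if lo' < y \<and> y < hi' then 1 / n else 0)" for y
  have int: "(g has_integral (1/n * (hi - lo) - c * (1/n * (hi' - lo')))) {0..1}"
    unfolding g_def
    by (intro has_integral_diff has_integral_mult_right has_integral_interval_indicator cell last)
  have eq: "bw_score c m x i y = g y" if y: "y \<in> {0..1} - tie_points ?A" for y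
  proof -
    have "0 < y" "y < 1" using y by (auto simp: tie_points_def)
    then have "((x i = Min ?A \<and> mid < y) \<or> (x i = Max ?A \<and> y < mid)) \<longleftrightarrow> lo' < y \<and> y < hi'"
      using spread unfolding lo'_def hi'_def by auto
    then show ?thesis
      unfolding bw_score_def g_def
      using prob_first_eq[OF i y] prob_last_eq[OF i y spread]
      unfolding n_def lo_def hi_def mid_def by simp
  qed
  have "(bw_score c m x i has_integral (1/n * (hi - lo) - c * (1/n * (hi' - lo')))) {0..1}"
    by (rule has_integral_spike_finite[OF finite_tie_points eq int]) simp_all
  then have "payoff c m x i = 1/n * (hi - lo) - c * (1/n * (hi' - lo'))"
    unfolding payoff_def by (rule integral_unique)
  moreover have "hi' - lo' = last_mass ?A (x i)"
    using spread unfolding hi'_def lo'_def last_mass_def mid_def by auto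
  ultimately have "payoff c m x i = (hi - lo - c * last_mass ?A (x i)) / n"
    by (simp add: diff_divide_distrib)
  then show ?thesis by (simp only: n_def lo_def hi_def)
qed

lemma length_sorted_positions: "length (sorted_list_of_set (positions m x)) = npos m x"
  by (simp add: npos_def)

lemma finite_positions: "finite (positions m x)"
  by (simp add: positions_def)

lemma pos_less:
  assumes "1 \<le> k" "k < k'" "k' \<le> npos m x"
  shows "pos m x k < pos m x k'"
  unfolding pos_def
  by (rule sorted_wrt_nth_less[OF strict_sorted_list_of_set]) (use assms in \<open>auto simp: npos_def\<close>)

lemma pos_le: "1 \<le> k \<Longrightarrow> k \<le> k' \<Longrightarrow> k' \<le> npos m x \<Longrightarrow> pos m x k \<le> pos m x k'"
  using pos_less[of k k' m x] by (cases "k = k'") auto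

lemma pos_less_iff:
  assumes "1 \<le> k" "k \<le> npos m x" "1 \<le> k'" "k' \<le> npos m x"
  shows "pos m x k < pos m x k' \<longleftrightarrow> k < k'"
  using pos_less[of k k' m x] pos_less[of k' k m x] assms
  by (metis less_irrefl linorder_neqE_nat order.asym)

lemma pos_eq_iff:
  assumes "1 \<le> k" "k \<le> npos m x" "1 \<le> k'" "k' \<le> npos m x"
  shows "pos m x k = pos m x k' \<longleftrightarrow> k = k'"
  using pos_less[of k k' m x] pos_less[of k' k m x] assms
  by (metis less_irrefl linorder_neqE_nat)

lemma pos_in_positions:
  assumes "1 \<le> k" "k \<le> npos m x"
  shows "pos m x k \<in> positions m x"
proof -
  have "sorted_list_of_set (positions m x) ! (k - 1) \<in> set (sorted_list_of_set (positions m x))"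
    using assms by (intro nth_mem) (simp add: length_sorted_positions npos_def)
  then show ?thesis by (simp add: pos_def finite_positions)
qed

lemma positions_obtain_pos:
  assumes "p \<in> positions m x"
  obtains k where "1 \<le> k" "k \<le> npos m x" "p = pos m x k"
proof -
  have "p \<in> set (sorted_list_of_set (positions m x))" using assms finite_positions by simp
  then obtain j where "j < npos m x" "sorted_list_of_set (positions m x) ! j = p"
    by (auto simp: in_set_conv_nth length_sorted_positions npos_def)
  then show ?thesis by (intro that[of "Suc j"]) (auto simp: pos_def)
qed

lemma pos_obtain_candidate:
  assumes "1 \<le> k" "k \<le> npos m x"
  obtains i where "i < m" "x i = pos m x k"
  using pos_in_positions[OF assms] by (auto simp: positions_def)

lemma pos_in_unit:
  assumes "is_profile m x" "1 \<le> k" "k \<le> npos m x"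
  shows "0 \<le> pos m x k" "pos m x k \<le> 1"
  using pos_in_positions[OF assms(2,3)] assms(1) by (auto simp: positions_def is_profile_def)

lemma positions_bounds:
  assumes "z \<in> positions m x"
  shows "pos m x 1 \<le> z" "z \<le> pos m x (npos m x)"
proof -
  obtain l where "1 \<le> l" "l \<le> npos m x" "z = pos m x l" using assms by (rule positions_obtain_pos)
  then show "pos m x 1 \<le> z" "z \<le> pos m x (npos m x)" using pos_le by auto
qed

lemma Min_positions: "1 \<le> npos m x \<Longrightarrow> Min (positions m x) = pos m x 1"
  by (rule Min_eqI[OF finite_positions positions_bounds(1) pos_in_positions]) auto

lemma Max_positions: "1 \<le> npos m x \<Longrightarrow> Max (positions m x) = pos m x (npos m x)"
  by (rule Max_eqI[OF finite_positions positions_bounds(2) pos_in_positions]) auto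

lemma no_position_between:
  assumes "z \<in> positions m x" "1 \<le> j" "j < npos m x"
  shows "\<not> (pos m x j < z \<and> z < pos m x (j + 1))"
proof
  assume between: "pos m x j < z \<and> z < pos m x (j + 1)"
  obtain l where l: "1 \<le> l" "l \<le> npos m x" "z = pos m x l" using assms(1) by (rule positions_obtain_pos)
  have "j < l" "l < j + 1"
    using between l assms pos_less_iff[of j m x l] pos_less_iff[of l m x "j + 1"] by auto
  then show False by auto
qed

lemma consecutive_positions:
  assumes "u \<in> positions m x" "w \<in> positions m x" "u < w"
    and "\<And>z. z \<in> positions m x \<Longrightarrow> \<not> (u < z \<and> z < w)"
  obtains k where "1 \<le> k" "k < npos m x" "u = pos m x k" "w = pos m x (k + 1)"
proof -
  obtain k where k: "1 \<le> k" "k \<le> npos m x" "u = pos m x k" using assms(1) by (rule positions_obtain_pos)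
  obtain j where j: "1 \<le> j" "j \<le> npos m x" "w = pos m x j" using assms(2) by (rule positions_obtain_pos)
  have "k < j" using pos_less_iff[of k m x j] k j assms(3) by auto
  moreover have "\<not> k + 1 < j"
  proof
    assume "k + 1 < j"
    then have "u < pos m x (k + 1)" "pos m x (k + 1) < w" "pos m x (k + 1) \<in> positions m x"
      using k j by (auto intro: pos_less pos_in_positions)
    then show False using assms(4) by blast
  qed
  ultimately have "j = k + 1" by simp
  then show ?thesis using k j by (intro that[of k]) auto
qed

lemma cell_lo_pos:
  assumes "1 \<le> k" "k \<le> npos m x"
  shows "cell_lo (positions m x) (pos m x k) = lbd m x k"
proof (cases "k = 1")
  case True
  have "cell_lo (positions m x) (pos m x 1) = 0" by (rule cell_lo_eq_0) (rule positions_bounds(1))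
  then show ?thesis using True by (simp add: lbd_def)
next
  case False
  have "cell_lo (positions m x) (pos m x k) = (pos m x (k - 1) + pos m x k) / 2"
  proof (rule cell_lo_eqI[OF finite_positions])
    show "pos m x (k - 1) \<in> positions m x" "pos m x (k - 1) < pos m x k"
      using assms False by (auto intro: pos_in_positions pos_less)
    fix z assume "z \<in> positions m x" "z < pos m x k"
    moreover from this(1) obtain j where "1 \<le> j" "j \<le> npos m x" "z = pos m x j"
      by (rule positions_obtain_pos)
    ultimately show "z \<le> pos m x (k - 1)"
      using pos_less_iff[of j m x k] pos_le[of j "k - 1" m x] assms by auto
  qed
  then show ?thesis using False by (simp add: lbd_def)
qed

lemma cell_hi_pos:
  assumes "1 \<le> k" "k \<le> npos m x"
  shows "cell_hi (positions m x) (pos m x k) = rbd m x k"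
proof (cases "k = npos m x")
  case True
  have "cell_hi (positions m x) (pos m x (npos m x)) = 1"
    by (rule cell_hi_eq_1) (rule positions_bounds(2))
  then show ?thesis using True by (simp add: rbd_def)
next
  case False
  have "cell_hi (positions m x) (pos m x k) = (pos m x k + pos m x (k + 1)) / 2"
  proof (rule cell_hi_eqI[OF finite_positions])
    show "pos m x (k + 1) \<in> positions m x" "pos m x k < pos m x (k + 1)"
      using assms False by (auto intro: pos_in_positions pos_less)
    fix z assume "z \<in> positions m x" "pos m x k < z"
    moreover from this(1) obtain j where "1 \<le> j" "j \<le> npos m x" "z = pos m x j"
      by (rule positions_obtain_pos)
    ultimately show "pos m x (k + 1) \<le> z"
      using pos_less_iff[of k m x j] pos_le[of "k + 1" j m x] assms by auto
  qed
  then show ?thesis using False by (simp add: rbd_def)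
qed

lemma nmult_eq_mult_at: "nmult m x k = mult_at m x (pos m x k)"
  by (simp add: nmult_def mult_at_def)

lemma nmult_ge_1:
  assumes "1 \<le> k" "k \<le> npos m x"
  shows "1 \<le> nmult m x k"
proof -
  obtain i where "i < m" "x i = pos m x k" using assms by (rule pos_obtain_candidate)
  then have "card {i} \<le> card {i. i < m \<and> x i = pos m x k}" by (intro card_mono) auto
  then show ?thesis by (simp add: nmult_def)
qed

lemma lenL_first: "lenL m x 1 = pos m x 1"
  by (simp add: lenL_def lbd_def)

lemma lenL_eq: "k \<noteq> 1 \<Longrightarrow> lenL m x k = (pos m x k - pos m x (k - 1)) / 2"
  by (simp add: lenL_def lbd_def field_simps)

lemma lenR_last: "lenR m x (npos m x) = 1 - pos m x (npos m x)"
  by (simp add: lenR_def rbd_def)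

lemma lenR_eq: "k \<noteq> npos m x \<Longrightarrow> lenR m x k = (pos m x (k + 1) - pos m x k) / 2"
  by (simp add: lenR_def rbd_def field_simps)

lemma lenI_eq: "lenI m x k = lenL m x k + lenR m x k"
  by (simp add: lenI_def lenL_def lenR_def)

lemma lenL_eq_lenR_pred: "1 < k \<Longrightarrow> k \<le> npos m x \<Longrightarrow> lenL m x k = lenR m x (k - 1)"
  by (simp add: lenL_eq lenR_eq)

lemma lenR_pos: "1 \<le> k \<Longrightarrow> k < npos m x \<Longrightarrow> 0 < lenR m x k"
  using pos_less[of k "k + 1" m x] by (simp add: lenR_eq)

definition pos_payoff :: "real \<Rightarrow> nat \<Rightarrow> (nat \<Rightarrow> real) \<Rightarrow> nat \<Rightarrow> real" where
  "pos_payoff c m x k =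
     (lenI m x k - c * last_mass (positions m x) (pos m x k)) / real (nmult m x k)"

lemma last_mass_first:
  "2 \<le> npos m x \<Longrightarrow> last_mass (positions m x) (pos m x 1) = 1 - (pos m x 1 + pos m x (npos m x)) / 2"
  by (simp add: last_mass_def Min_positions Max_positions)

lemma last_mass_last:
  "2 \<le> npos m x \<Longrightarrow> last_mass (positions m x) (pos m x (npos m x)) = (pos m x 1 + pos m x (npos m x)) / 2"
  using pos_less[of 1 "npos m x" m x] by (simp add: last_mass_def Min_positions Max_positions)

lemma last_mass_interior:
  "1 < k \<Longrightarrow> k < npos m x \<Longrightarrow> last_mass (positions m x) (pos m x k) = 0"
  using pos_eq_iff[of k m x 1] pos_eq_iff[of k m x "npos m x"]
  by (simp add: last_mass_def Min_positions Max_positions)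

lemma pos_payoff_interior: "1 < k \<Longrightarrow> k < npos m x \<Longrightarrow> pos_payoff c m x k = lenI m x k / real (nmult m x k)"
  by (simp add: pos_payoff_def last_mass_interior)

lemma payoff_at_pos:
  assumes prof: "is_profile m x" and two: "2 \<le> npos m x" and i: "i < m" and "1 \<le> k" "k \<le> npos m x"
    and xi: "x i = pos m x k"
  shows "payoff c m x i = pos_payoff c m x k"
proof -
  have A: "x ` {..<m} = positions m x" by (simp add: positions_def)
  have "pos m x 1 < pos m x (npos m x)" using two by (intro pos_less) auto
  then have "Min (x ` {..<m}) < Max (x ` {..<m})" using two by (simp add: A Min_positions Max_positions)
  then show ?thesis
    using payoff_eq_cell[OF prof i] cell_lo_pos[of k m x] cell_hi_pos[of k m x] assms
    by (simp add: A xi pos_payoff_def lenI_def nmult_eq_mult_at)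
qed

section \<open>Unilateral deviations\<close>

definition others :: "nat \<Rightarrow> (nat \<Rightarrow> real) \<Rightarrow> nat \<Rightarrow> real set" where
  "others m x i = x ` ({..<m} - {i})"

lemma finite_others: "finite (others m x i)"
  by (simp add: others_def)

lemma others_subset_positions: "others m x i \<subseteq> positions m x"
  by (auto simp: others_def positions_def)

lemma positions_upd: "i < m \<Longrightarrow> (x(i := t)) ` {..<m} = insert t (others m x i)"
  by (auto simp: others_def image_iff)

lemma others_eq_positions:
  assumes "i < m" "x i = pos m x k" "2 \<le> nmult m x k"
  shows "others m x i = positions m x"
proof -
  have "\<not> {j. j < m \<and> x j = pos m x k} \<subseteq> {i}"
  proof
    assume "{j. j < m \<and> x j = pos m x k} \<subseteq> {i}"
    then have "nmult m x k \<le> card {i}" unfolding nmult_def by (intro card_mono) auto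
    then show False using assms(3) by simp
  qed
  then obtain j where j: "j < m" "x j = x i" "j \<noteq> i" using assms(2) by auto
  show ?thesis
  proof
    show "others m x i \<subseteq> positions m x" by (rule others_subset_positions)
    show "positions m x \<subseteq> others m x i"
    proof
      fix z assume "z \<in> positions m x"
      then obtain l where l: "l < m" "z = x l" by (auto simp: positions_def)
      show "z \<in> others m x i"
      proof (cases "l = i")
        case True then show ?thesis using j l by (auto simp: others_def intro!: image_eqI[where x=j])
      next
        case False then show ?thesis using l by (auto simp: others_def)
      qed
    qed
  qed
qed

lemma others_eq_positions_remove:
  assumes "i < m" "x i = pos m x k" "nmult m x k = 1"
  shows "others m x i = positions m x - {pos m x k}"
proof -
  have "i \<in> {j. j < m \<and> x j = pos m x k}" using assms by auto
  then have "{j. j < m \<and> x j = pos m x k} = {i}"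
    using assms(3) unfolding nmult_def by (metis card_1_singletonE singletonD)
  then have uniq: "\<And>j. j < m \<Longrightarrow> x j = pos m x k \<Longrightarrow> j = i" by auto
  show ?thesis
  proof
    show "others m x i \<subseteq> positions m x - {pos m x k}"
      using uniq by (auto simp: others_def positions_def)
    show "positions m x - {pos m x k} \<subseteq> others m x i"
      using assms(2) by (auto simp: others_def positions_def)
  qed
qed

lemma pos_in_others:
  assumes "1 \<le> k" "k \<le> npos m x" "2 \<le> nmult m x k"
  shows "pos m x k \<in> others m x i"
proof (cases "i < m \<and> x i = pos m x k")
  case True
  then show ?thesis using others_eq_positions[of i m x k] assms pos_in_positions by auto
next
  case False
  obtain j where j: "j < m" "x j = pos m x k" using assms(1,2) by (rule pos_obtain_candidate)
  then have "j \<in> {..<m} - {i}" using False by auto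
  then show ?thesis using j(2) unfolding others_def by (metis image_eqI)
qed

lemma pos_in_others_if_single:
  assumes "i < m" "x i = pos m x k" "nmult m x k = 1" "1 \<le> k" "k \<le> npos m x"
    and "1 \<le> l" "l \<le> npos m x" "l \<noteq> k"
  shows "pos m x l \<in> others m x i"
  using others_eq_positions_remove[OF assms(1-3)] pos_in_positions[OF assms(6,7)]
    pos_eq_iff[OF assms(6,7,4,5)] assms(8) by auto

lemma others_eq_pos_if_single:
  assumes "i < m" "x i = pos m x k" "nmult m x k = 1" "z \<in> others m x i"
  shows "\<exists>l. 1 \<le> l \<and> l \<le> npos m x \<and> l \<noteq> k \<and> z = pos m x l"
proof -
  have z: "z \<in> positions m x" "z \<noteq> pos m x k"
    using others_eq_positions_remove[OF assms(1-3)] assms(4) by auto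
  obtain l where "1 \<le> l" "l \<le> npos m x" "z = pos m x l" using z(1) by (rule positions_obtain_pos)
  then show ?thesis using z(2) by blast
qed

lemma mult_at_upd_eq_1:
  assumes "i < m" "t \<notin> others m x i"
  shows "mult_at m (x(i := t)) t = 1"
proof -
  have "{j. j < m \<and> (x(i := t)) j = t} = {i}" using assms by (auto simp: others_def image_iff)
  then show ?thesis by (simp add: mult_at_def)
qed

lemma mult_at_upd_ge_2:
  assumes "i < m" "t \<in> others m x i"
  shows "2 \<le> mult_at m (x(i := t)) t"
proof -
  obtain j where j: "j < m" "j \<noteq> i" "x j = t" using assms by (auto simp: others_def)
  have "{i, j} \<subseteq> {j. j < m \<and> (x(i := t)) j = t}" using assms j by auto
  then have "card {i, j} \<le> mult_at m (x(i := t)) t" unfolding mult_at_def by (intro card_mono) auto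
  then show ?thesis using j by simp
qed

lemma payoff_upd_eq_cell:
  assumes prof: "is_profile m x" and i: "i < m" and t: "t \<in> {0..1}"
    and spread: "Min (insert t (others m x i)) < Max (insert t (others m x i))"
  shows "payoff c m (x(i := t)) i =
    (cell_hi (insert t (others m x i)) t - cell_lo (insert t (others m x i)) t
      - c * last_mass (insert t (others m x i)) t) / real (mult_at m (x(i := t)) t)"
proof -
  have "is_profile m (x(i := t))" using prof t by (auto simp: is_profile_def)
  from payoff_eq_cell[OF this i, of c, unfolded positions_upd[OF i] fun_upd_same] spread
  show ?thesis .
qed

lemma payoff_move_between:
  assumes prof: "is_profile m x" and i: "i < m" and t: "t \<in> {0..1}"
    and a: "a \<in> others m x i" and b: "b \<in> others m x i" and "a < t" "t < b"
    and gap: "\<And>z. z \<in> others m x i \<Longrightarrow> \<not> (a < z \<and> z < b)"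
  shows "payoff c m (x(i := t)) i = (b - a) / 2"
proof -
  let ?A = "insert t (others m x i)"
  have fin: "finite ?A" by (simp add: finite_others)
  have ext: "Min ?A \<le> a" "b \<le> Max ?A" using a b fin by auto
  have "t \<notin> others m x i" using gap assms(6,7) by blast
  then have n: "mult_at m (x(i := t)) t = 1" by (rule mult_at_upd_eq_1[OF i])
  have spread: "Min ?A < Max ?A" using ext assms(6,7) by linarith
  have L: "last_mass ?A t = 0" using ext assms(6,7) by (auto simp: last_mass_def)
  have lo: "cell_lo ?A t = (a + t) / 2"
    by (rule cell_lo_eqI[OF fin]) (use a gap assms(6,7) in force)+
  have hi: "cell_hi ?A t = (t + b) / 2"
    by (rule cell_hi_eqI[OF fin]) (use b gap assms(6,7) in force)+
  show ?thesis
    unfolding payoff_upd_eq_cell[OF prof i t spread] n L lo hi by (simp add: field_simps)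
qed

lemma payoff_move_below:
  assumes prof: "is_profile m x" and i: "i < m" and t: "t \<in> {0..1}"
    and a: "a \<in> others m x i" and b: "b \<in> others m x i"
    and below: "\<And>z. z \<in> others m x i \<Longrightarrow> t < z \<and> a \<le> z \<and> z \<le> b"
  shows "payoff c m (x(i := t)) i = (t + a) / 2 - c * (1 - (t + b) / 2)"
proof -
  let ?A = "insert t (others m x i)"
  have fin: "finite ?A" by (simp add: finite_others)
  have mn: "Min ?A = t" using below fin by (intro Min_eqI) (auto intro: less_imp_le)
  have mx: "Max ?A = b" using below fin b by (intro Max_eqI) (auto intro: less_imp_le)
  have "t \<notin> others m x i" using below by blast
  then have n: "mult_at m (x(i := t)) t = 1" by (rule mult_at_upd_eq_1[OF i])
  have spread: "Min ?A < Max ?A" using below b mn mx by auto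
  have L: "last_mass ?A t = 1 - (t + b) / 2" using mn mx by (simp add: last_mass_def)
  have lo: "cell_lo ?A t = 0" by (rule cell_lo_eq_0) (use below in \<open>auto intro: less_imp_le\<close>)
  have hi: "cell_hi ?A t = (t + a) / 2"
    by (rule cell_hi_eqI[OF fin]) (use a below in auto)
  show ?thesis
    unfolding payoff_upd_eq_cell[OF prof i t spread] n L lo hi by (simp add: field_simps)
qed

lemma payoff_move_above:
  assumes prof: "is_profile m x" and i: "i < m" and t: "t \<in> {0..1}"
    and a: "a \<in> others m x i" and b: "b \<in> others m x i"
    and above: "\<And>z. z \<in> others m x i \<Longrightarrow> z < t \<and> a \<le> z \<and> z \<le> b"
  shows "payoff c m (x(i := t)) i = 1 - (b + t) / 2 - c * ((a + t) / 2)"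
proof -
  let ?A = "insert t (others m x i)"
  have fin: "finite ?A" by (simp add: finite_others)
  have mx: "Max ?A = t" using above fin by (intro Max_eqI) (auto intro: less_imp_le)
  have mn: "Min ?A = a" using above fin a by (intro Min_eqI) (auto intro: less_imp_le)
  have "t \<notin> others m x i" using above by blast
  then have n: "mult_at m (x(i := t)) t = 1" by (rule mult_at_upd_eq_1[OF i])
  have spread: "Min ?A < Max ?A" using above a mn mx by auto
  have L: "last_mass ?A t = (a + t) / 2" using mn mx spread by (simp add: last_mass_def)
  have hi: "cell_hi ?A t = 1" by (rule cell_hi_eq_1) (use above in \<open>auto intro: less_imp_le\<close>)
  have lo: "cell_lo ?A t = (b + t) / 2"
    by (rule cell_lo_eqI[OF fin]) (use b above in auto)
  show ?thesis
    unfolding payoff_upd_eq_cell[OF prof i t spread] n L lo hi by (simp add: field_simps)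
qed

text \<open>Joining an occupied position means sharing its cell with at least one other candidate.\<close>

lemma payoff_move_onto_other_le:
  assumes prof: "is_profile m x" and i: "i < m" and t: "t \<in> {0..1}" and tO: "t \<in> others m x i"
    and spread: "Min (others m x i) < Max (others m x i)"
    and share: "0 \<le> cell_hi (others m x i) t - cell_lo (others m x i) t - c * last_mass (others m x i) t"
  shows "payoff c m (x(i := t)) i \<le>
    (cell_hi (others m x i) t - cell_lo (others m x i) t - c * last_mass (others m x i) t) / 2"
proof -
  have A: "insert t (others m x i) = others m x i" using tO by auto
  have "payoff c m (x(i := t)) i =
    (cell_hi (others m x i) t - cell_lo (others m x i) t - c * last_mass (others m x i) t)
      / real (mult_at m (x(i := t)) t)"
    using payoff_upd_eq_cell[OF prof i t, of c] spread unfolding A by simp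
  also have "\<dots> \<le>
      (cell_hi (others m x i) t - cell_lo (others m x i) t - c * last_mass (others m x i) t) / 2"
    using share mult_at_upd_ge_2[OF i tO] by (intro divide_left_mono) auto
  finally show ?thesis .
qed

lemma payoff_move_to_gap_midpoint:
  assumes prof: "is_profile m x" and i: "i < m" and j: "1 \<le> j" "j < npos m x"
    and "pos m x j \<in> others m x i" "pos m x (j + 1) \<in> others m x i"
  shows "payoff c m (x(i := (pos m x j + pos m x (j + 1)) / 2)) i = lenR m x j"
proof -
  have lt: "pos m x j < pos m x (j + 1)" using j by (intro pos_less) auto
  have "0 \<le> pos m x j" "pos m x (j + 1) \<le> 1" using pos_in_unit[OF prof] j by auto
  then have t: "(pos m x j + pos m x (j + 1)) / 2 \<in> {0..1}" using lt by auto
  have "payoff c m (x(i := (pos m x j + pos m x (j + 1)) / 2)) i = (pos m x (j + 1) - pos m x j) / 2"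
  proof (rule payoff_move_between[OF prof i t assms(5,6)])
    fix z assume "z \<in> others m x i"
    then have "z \<in> positions m x" using others_subset_positions by blast
    then show "\<not> (pos m x j < z \<and> z < pos m x (j + 1))" by (rule no_position_between[OF _ j])
  qed (use lt in auto)
  then show ?thesis using j by (simp add: lenR_eq)
qed

lemma two_shares_eq:
  fixes v a b :: real
  assumes "2 \<le> n" "0 < v" "real n * v = a + b" "a \<le> v" "b \<le> v"
  shows "n = 2" "a = v" "b = v"
proof -
  have "real n * v \<le> 2 * v" using assms by linarith
  then have "real n \<le> 2" using assms(2) by simp
  then show "n = 2" using assms(1) by simp
  then show "a = v" "b = v" using assms by auto
qed

lemma two_parts_le:
  fixes a b v :: real
  shows "0 \<le> a \<Longrightarrow> 0 \<le> b \<Longrightarrow> a \<le> v \<Longrightarrow> b \<le> v \<Longrightarrow> 0 \<le> a + b \<and> a + b \<le> 2 * v"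
  by auto

lemma le_if_approx_from_below:
  fixes X V c p :: real
  assumes "0 < p" "0 \<le> c" and approx: "\<And>d. 0 < d \<Longrightarrow> d \<le> p \<Longrightarrow> X - (1 + c) * d / 2 \<le> V"
  shows "X \<le> V"
proof (rule ccontr)
  assume "\<not> X \<le> V"
  define d where "d = min p ((X - V) / (1 + c))"
  have "0 < d" "d \<le> p" using assms \<open>\<not> X \<le> V\<close> unfolding d_def by auto
  moreover have "d \<le> (X - V) / (1 + c)" unfolding d_def by simp
  then have "(1 + c) * d \<le> X - V" using assms(2) by (simp add: field_simps)
  ultimately show False using approx[of d] \<open>\<not> X \<le> V\<close> by (simp add: field_simps)
qed

locale two_position_profile =
  fixes m :: nat and x :: "nat \<Rightarrow> real"
  assumes profile: "is_profile m x" and two_le_npos: "2 \<le> npos m x"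
begin

abbreviation q :: nat where "q \<equiv> npos m x"

abbreviation Ip :: real where "Ip \<equiv> lenR m x 1"

lemma pos_first_less_last: "pos m x 1 < pos m x q"
  using two_le_npos by (intro pos_less) auto

lemma first_candidate:
  obtains i where "i < m" "x i = pos m x 1"
  by (rule pos_obtain_candidate[of 1 m x]) (use two_le_npos in auto)

lemma last_candidate:
  obtains i where "i < m" "x i = pos m x q"
  by (rule pos_obtain_candidate[of q m x]) (use two_le_npos in auto)

lemma is_NCNE_iff_is_NE: "is_NCNE c m x \<longleftrightarrow> is_NE c m x"
proof -
  obtain i where "i < m" "x i = pos m x 1" by (rule first_candidate)
  moreover obtain j where "j < m" "x j = pos m x q" by (rule last_candidate)
  ultimately show ?thesis using pos_first_less_last unfolding is_NCNE_def by fastforce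
qed

end

section \<open>Necessity\<close>

locale bw_equilibrium = two_position_profile +
  fixes c :: real
  assumes c_nonneg: "0 \<le> c" and equilibrium: "is_NE c m x"
begin

lemma deviation_le:
  assumes "i < m" "1 \<le> k" "k \<le> q" "x i = pos m x k" "t \<in> {0..1}"
  shows "payoff c m (x(i := t)) i \<le> pos_payoff c m x k"
proof -
  have "payoff c m (x(i := t)) i \<le> payoff c m x i" using equilibrium assms(1,5) by (simp add: is_NE_def)
  also have "\<dots> = pos_payoff c m x k" by (rule payoff_at_pos[OF profile two_le_npos assms(1-4)])
  finally show ?thesis .
qed

lemma gap_le_pos_payoff:
  assumes k: "1 \<le> k" "k \<le> q" and shared: "2 \<le> nmult m x k" and j: "1 \<le> j" "j < q"
  shows "lenR m x j \<le> pos_payoff c m x k"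
proof -
  obtain i where i: "i < m" "x i = pos m x k" using k by (rule pos_obtain_candidate)
  have O: "others m x i = positions m x" by (rule others_eq_positions[OF i shared])
  have "pos m x j \<in> positions m x" "pos m x (j + 1) \<in> positions m x"
    using j by (simp_all add: pos_in_positions)
  then have "payoff c m (x(i := (pos m x j + pos m x (j + 1)) / 2)) i = lenR m x j"
    unfolding O[symmetric] by (rule payoff_move_to_gap_midpoint[OF profile i(1) j])
  moreover have "0 \<le> pos m x j" "pos m x (j + 1) \<le> 1"
    using pos_in_unit[OF profile] j by simp_all
  then have "(pos m x j + pos m x (j + 1)) / 2 \<in> {0..1}"
    using pos_less[of j "j + 1" m x] j by simp
  ultimately show ?thesis using deviation_le[OF i(1) k i(2)] by metis
qed

text \<open>A lone candidate at an extreme position gains by moving halfway towards her neighbour: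
  her cell grows and fewer voters rank her last.\<close>

lemma nmult_first_ge_2: "2 \<le> nmult m x 1"
proof (rule ccontr)
  assume "\<not> ?thesis"
  then have single: "nmult m x 1 = 1" using nmult_ge_1[of 1 m x] two_le_npos by linarith
  obtain i where i: "i < m" "x i = pos m x 1" by (rule first_candidate)
  define t where "t = (pos m x 1 + pos m x 2) / 2"
  have p12: "pos m x 1 < pos m x 2" using two_le_npos by (intro pos_less) auto
  have t: "t \<in> {0..1}"
    using pos_in_unit[OF profile, of 1] pos_in_unit[OF profile, of 2] two_le_npos p12
    unfolding t_def by auto
  have others_range: "t < z \<and> pos m x 2 \<le> z \<and> z \<le> pos m x q" if z: "z \<in> others m x i" for z
  proof -
    obtain l where l: "1 \<le> l" "l \<le> q" "l \<noteq> 1" "z = pos m x l"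
      using others_eq_pos_if_single[OF i single z] by blast
    have "pos m x 2 \<le> pos m x l" "pos m x l \<le> pos m x q" using l by (simp_all add: pos_le)
    then show ?thesis using l(4) p12 unfolding t_def by simp
  qed
  have "pos m x 2 \<in> others m x i" "pos m x q \<in> others m x i"
    using two_le_npos by (simp_all add: pos_in_others_if_single[OF i single])
  then have "payoff c m (x(i := t)) i = (t + pos m x 2) / 2 - c * (1 - (t + pos m x q) / 2)"
    using others_range by (rule payoff_move_below[OF profile i(1) t])
  moreover have "payoff c m (x(i := t)) i \<le> pos_payoff c m x 1"
    using two_le_npos by (intro deviation_le[OF i(1) _ _ i(2) t]) simp_all
  moreover have
    "pos_payoff c m x 1 = (pos m x 1 + pos m x 2) / 2 - c * (1 - (pos m x 1 + pos m x q) / 2)"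
  proof -
    have "lenR m x 1 = (pos m x 2 - pos m x 1) / 2"
      using lenR_eq[of 1 m x] two_le_npos by (simp add: numeral_2_eq_2)
    then have I: "lenI m x 1 = (pos m x 1 + pos m x 2) / 2"
      using lenL_first[of m x] by (simp add: lenI_eq field_simps)
    show ?thesis unfolding pos_payoff_def I single last_mass_first[OF two_le_npos] by simp
  qed
  moreover have "c * pos m x 1 \<le> c * t" using c_nonneg p12 unfolding t_def by (intro mult_left_mono) auto
  ultimately show False using p12 unfolding t_def by (simp add: field_simps)
qed

lemma nmult_last_ge_2: "2 \<le> nmult m x q"
proof (rule ccontr)
  assume "\<not> ?thesis"
  then have single: "nmult m x q = 1" using nmult_ge_1[of q m x] two_le_npos by linarith
  obtain i where i: "i < m" "x i = pos m x q" by (rule last_candidate)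
  define t where "t = (pos m x (q - 1) + pos m x q) / 2"
  have p12: "pos m x (q - 1) < pos m x q" using two_le_npos by (intro pos_less) auto
  have t: "t \<in> {0..1}"
    using pos_in_unit[OF profile, of "q - 1"] pos_in_unit[OF profile, of q] two_le_npos p12
    unfolding t_def by auto
  have others_range: "z < t \<and> pos m x 1 \<le> z \<and> z \<le> pos m x (q - 1)" if z: "z \<in> others m x i" for z
  proof -
    obtain l where l: "1 \<le> l" "l \<le> q" "l \<noteq> q" "z = pos m x l"
      using others_eq_pos_if_single[OF i single z] by blast
    have "pos m x 1 \<le> pos m x l" "pos m x l \<le> pos m x (q - 1)" using l by (simp_all add: pos_le)
    then show ?thesis using l(4) p12 unfolding t_def by simp
  qed
  have "pos m x 1 \<in> others m x i" "pos m x (q - 1) \<in> others m x i"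
    using two_le_npos by (simp_all add: pos_in_others_if_single[OF i single])
  then have "payoff c m (x(i := t)) i = 1 - (pos m x (q - 1) + t) / 2 - c * ((pos m x 1 + t) / 2)"
    using others_range by (rule payoff_move_above[OF profile i(1) t])
  moreover have "payoff c m (x(i := t)) i \<le> pos_payoff c m x q"
    using two_le_npos by (intro deviation_le[OF i(1) _ _ i(2) t]) simp_all
  moreover have
    "pos_payoff c m x q = (1 - (pos m x (q - 1) + pos m x q) / 2) - c * ((pos m x 1 + pos m x q) / 2)"
  proof -
    have "lenL m x q = (pos m x q - pos m x (q - 1)) / 2" using lenL_eq[of q m x] two_le_npos by simp
    then have "lenI m x q = 1 - (pos m x (q - 1) + pos m x q) / 2"
      by (simp add: lenI_eq lenR_last field_simps)
    then show ?thesis unfolding pos_payoff_def single last_mass_last[OF two_le_npos] by simp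
  qed
  moreover have "c * t \<le> c * pos m x q" using c_nonneg p12 unfolding t_def by (intro mult_left_mono) auto
  ultimately show False using p12 unfolding t_def by (simp add: field_simps)
qed

lemma pos_payoff_pos: "1 \<le> k \<Longrightarrow> k \<le> q \<Longrightarrow> 2 \<le> nmult m x k \<Longrightarrow> 0 < pos_payoff c m x k"
  using gap_le_pos_payoff[of k 1] lenR_pos[of 1 m x] two_le_npos by force

text \<open>Outflanking: a candidate at an extreme position moving slightly outwards keeps almost her
  whole half-electorate to the outside but leaves the shared cell.\<close>

lemma outflank_left_le: "lenL m x 1 - c * last_mass (positions m x) (pos m x 1) \<le> pos_payoff c m x 1"
proof -
  have mass: "last_mass (positions m x) (pos m x 1) = 1 - (pos m x 1 + pos m x q) / 2"
    by (rule last_mass_first[OF two_le_npos])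
  have "0 \<le> pos m x 1" "pos m x q \<le> 1"
    using pos_in_unit[OF profile, of 1] pos_in_unit[OF profile, of q] two_le_npos by auto
  then have mass_nonneg: "0 \<le> 1 - (pos m x 1 + pos m x q) / 2" using pos_first_less_last by auto
  show ?thesis
  proof (cases "pos m x 1 = 0")
    case True
    have "0 \<le> c * (1 - (pos m x 1 + pos m x q) / 2)" by (rule mult_nonneg_nonneg[OF c_nonneg mass_nonneg])
    moreover have "0 < pos_payoff c m x 1"
      by (rule pos_payoff_pos) (use nmult_first_ge_2 two_le_npos in auto)
    ultimately show ?thesis unfolding mass lenL_first using True by linarith
  next
    case False
    obtain i where i: "i < m" "x i = pos m x 1" by (rule first_candidate)
    have O: "others m x i = positions m x" by (rule others_eq_positions[OF i nmult_first_ge_2])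
    show ?thesis
    proof (rule le_if_approx_from_below[OF _ c_nonneg])
      show "0 < pos m x 1" using False \<open>0 \<le> pos m x 1\<close> by simp
      fix d assume d: "0 < d" "d \<le> pos m x 1"
      define t where "t = pos m x 1 - d"
      have t: "t \<in> {0..1}" using d pos_first_less_last \<open>pos m x q \<le> 1\<close> unfolding t_def by auto
      have "pos m x 1 \<in> others m x i" "pos m x q \<in> others m x i"
        unfolding O using two_le_npos by (simp_all add: pos_in_positions)
      moreover have "t < z \<and> pos m x 1 \<le> z \<and> z \<le> pos m x q" if "z \<in> others m x i" for z
        using that positions_bounds[of z m x] d unfolding O t_def by auto
      ultimately have "payoff c m (x(i := t)) i = (t + pos m x 1) / 2 - c * (1 - (t + pos m x q) / 2)"
        by (rule payoff_move_below[OF profile i(1) t])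
      moreover have "payoff c m (x(i := t)) i \<le> pos_payoff c m x 1"
        using two_le_npos by (intro deviation_le[OF i(1) _ _ i(2) t]) simp_all
      ultimately show "lenL m x 1 - c * last_mass (positions m x) (pos m x 1) - (1 + c) * d / 2
          \<le> pos_payoff c m x 1"
        using lenL_first[of m x] unfolding mass t_def by (simp add: field_simps)
    qed
  qed
qed

lemma outflank_right_le: "lenR m x q - c * last_mass (positions m x) (pos m x q) \<le> pos_payoff c m x q"
proof -
  have mass: "last_mass (positions m x) (pos m x q) = (pos m x 1 + pos m x q) / 2"
    by (rule last_mass_last[OF two_le_npos])
  have "0 \<le> pos m x 1" "pos m x q \<le> 1"
    using pos_in_unit[OF profile, of 1] pos_in_unit[OF profile, of q] two_le_npos by auto
  then have mass_nonneg: "0 \<le> (pos m x 1 + pos m x q) / 2" using pos_first_less_last by auto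
  show ?thesis
  proof (cases "pos m x q = 1")
    case True
    have "0 \<le> c * ((pos m x 1 + pos m x q) / 2)" by (rule mult_nonneg_nonneg[OF c_nonneg mass_nonneg])
    moreover have "0 < pos_payoff c m x q"
      by (rule pos_payoff_pos) (use nmult_last_ge_2 two_le_npos in auto)
    ultimately show ?thesis unfolding mass lenR_last using True by linarith
  next
    case False
    obtain i where i: "i < m" "x i = pos m x q" by (rule last_candidate)
    have O: "others m x i = positions m x" by (rule others_eq_positions[OF i nmult_last_ge_2])
    show ?thesis
    proof (rule le_if_approx_from_below[OF _ c_nonneg])
      show "0 < 1 - pos m x q" using False \<open>pos m x q \<le> 1\<close> by simp
      fix d assume d: "0 < d" "d \<le> 1 - pos m x q"
      define t where "t = pos m x q + d"
      have t: "t \<in> {0..1}" using d pos_first_less_last \<open>0 \<le> pos m x 1\<close> unfolding t_def by auto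
      have "pos m x 1 \<in> others m x i" "pos m x q \<in> others m x i"
        unfolding O using two_le_npos by (simp_all add: pos_in_positions)
      moreover have "z < t \<and> pos m x 1 \<le> z \<and> z \<le> pos m x q" if "z \<in> others m x i" for z
        using that positions_bounds[of z m x] d unfolding O t_def by auto
      ultimately have "payoff c m (x(i := t)) i = 1 - (pos m x q + t) / 2 - c * ((pos m x 1 + t) / 2)"
        by (rule payoff_move_above[OF profile i(1) t])
      moreover have "payoff c m (x(i := t)) i \<le> pos_payoff c m x q"
        using two_le_npos by (intro deviation_le[OF i(1) _ _ i(2) t]) simp_all
      ultimately show "lenR m x q - c * last_mass (positions m x) (pos m x q) - (1 + c) * d / 2
          \<le> pos_payoff c m x q"
        using lenR_last[of m x] unfolding mass t_def by (simp add: field_simps)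
    qed
  qed
qed

lemma first_position_balanced:
  "nmult m x 1 = 2 \<and> pos_payoff c m x 1 = Ip \<and>
   lenL m x 1 - c * last_mass (positions m x) (pos m x 1) = Ip"
proof -
  have "real (nmult m x 1) * pos_payoff c m x 1
      = (lenL m x 1 - c * last_mass (positions m x) (pos m x 1)) + Ip"
    using nmult_first_ge_2 by (simp add: pos_payoff_def lenI_eq)
  moreover have "Ip \<le> pos_payoff c m x 1"
    using nmult_first_ge_2 two_le_npos by (intro gap_le_pos_payoff) auto
  moreover have "0 < pos_payoff c m x 1"
    using nmult_first_ge_2 two_le_npos by (intro pos_payoff_pos) auto
  ultimately show ?thesis
    using two_shares_eq[OF nmult_first_ge_2] outflank_left_le by metis
qed

lemma last_position_balanced:
  "nmult m x q = 2 \<and> pos_payoff c m x q = lenL m x q \<and>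
   lenR m x q - c * last_mass (positions m x) (pos m x q) = lenL m x q"
proof -
  have "real (nmult m x q) * pos_payoff c m x q
      = lenL m x q + (lenR m x q - c * last_mass (positions m x) (pos m x q))"
    using nmult_last_ge_2 by (simp add: pos_payoff_def lenI_eq)
  moreover have "lenL m x q \<le> pos_payoff c m x q"
    using nmult_last_ge_2 two_le_npos gap_le_pos_payoff[of q "q - 1"] lenL_eq_lenR_pred[of q m x] by simp
  moreover have "0 < pos_payoff c m x q"
    using nmult_last_ge_2 two_le_npos by (intro pos_payoff_pos) auto
  ultimately show ?thesis
    using two_shares_eq[OF nmult_last_ge_2] outflank_right_le by metis
qed

lemma lenR_le_Ip: "1 \<le> j \<Longrightarrow> j < q \<Longrightarrow> lenR m x j \<le> Ip"
  using gap_le_pos_payoff[of 1 j] first_position_balanced two_le_npos by auto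

lemma lenL_last_eq_Ip: "lenL m x q = Ip"
proof (rule antisym)
  show "lenL m x q \<le> Ip"
    using lenR_le_Ip[of "q - 1"] lenL_eq_lenR_pred[of q m x] two_le_npos by simp
  show "Ip \<le> lenL m x q"
    using gap_le_pos_payoff[of q 1] last_position_balanced two_le_npos by auto
qed

lemma extremes_sum_eq_1: "pos m x 1 + pos m x q = 1"
proof -
  have "lenL m x 1 - c * (1 - (pos m x 1 + pos m x q) / 2) = Ip"
    using first_position_balanced unfolding last_mass_first[OF two_le_npos] by simp
  moreover have "lenR m x q - c * ((pos m x 1 + pos m x q) / 2) = Ip"
    using last_position_balanced lenL_last_eq_Ip unfolding last_mass_last[OF two_le_npos] by simp
  ultimately have "(pos m x 1 + pos m x q - 1) * (1 + c) = 0"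
    using lenL_first[of m x] lenR_last[of m x] by (simp add: field_simps)
  then show ?thesis using c_nonneg by simp
qed

lemma lenL_first_eq: "lenL m x 1 = Ip + c / 2"
  using first_position_balanced extremes_sum_eq_1 unfolding last_mass_first[OF two_le_npos] by simp

lemma lenR_last_eq: "lenR m x q = Ip + c / 2"
  using last_position_balanced extremes_sum_eq_1 lenL_last_eq_Ip
  unfolding last_mass_last[OF two_le_npos] by simp

lemma interior_shared_position:
  assumes k: "1 < k" "k < q" and shared: "2 \<le> nmult m x k"
  shows "nmult m x k = 2 \<and> lenL m x k = Ip \<and> lenR m x k = Ip"
proof -
  have L: "lenL m x k = lenR m x (k - 1)" using lenL_eq_lenR_pred[of k m x] k by simp
  have "real (nmult m x k) * pos_payoff c m x k = lenL m x k + lenR m x k"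
    using k shared by (simp add: pos_payoff_interior lenI_eq)
  moreover have "lenL m x k \<le> pos_payoff c m x k" "lenR m x k \<le> pos_payoff c m x k"
    using k shared gap_le_pos_payoff[of k "k - 1"] gap_le_pos_payoff[of k k] L by auto
  moreover have "0 < pos_payoff c m x k" using k shared by (intro pos_payoff_pos) auto
  ultimately have "nmult m x k = 2" "lenL m x k = pos_payoff c m x k" "lenR m x k = pos_payoff c m x k"
    using two_shares_eq[OF shared] by blast+
  moreover have "Ip \<le> pos_payoff c m x k" using k shared gap_le_pos_payoff[of k 1] by auto
  moreover have "lenL m x k \<le> Ip" using L lenR_le_Ip[of "k - 1"] k by simp
  ultimately show ?thesis by linarith
qed

lemma lenR_le_lenI_if_single:
  assumes k: "1 \<le> k" "k \<le> q" and single: "nmult m x k = 1" and j: "1 \<le> j" "j < q"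
  shows "lenR m x j \<le> lenI m x k"
proof -
  have k': "1 < k" "k < q"
    using k single first_position_balanced last_position_balanced by (auto simp: le_less)
  show ?thesis
  proof (cases "j = k - 1 \<or> j = k")
    case True
    have "lenL m x k = lenR m x (k - 1)" using lenL_eq_lenR_pred[of k m x] k' by simp
    moreover have "0 < lenR m x (k - 1)" "0 < lenR m x k" using k' by (simp_all add: lenR_pos)
    ultimately show ?thesis using True by (auto simp: lenI_eq)
  next
    case False
    obtain i where i: "i < m" "x i = pos m x k" using k by (rule pos_obtain_candidate)
    have "pos m x j \<in> others m x i" "pos m x (j + 1) \<in> others m x i"
      using False j k by (auto intro!: pos_in_others_if_single[OF i single])
    then have "payoff c m (x(i := (pos m x j + pos m x (j + 1)) / 2)) i = lenR m x j"
      by (rule payoff_move_to_gap_midpoint[OF profile i(1) j])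
    moreover have "0 \<le> pos m x j" "pos m x (j + 1) \<le> 1" using pos_in_unit[OF profile] j by simp_all
    then have "(pos m x j + pos m x (j + 1)) / 2 \<in> {0..1}" using pos_less[of j "j + 1" m x] j by simp
    ultimately have "lenR m x j \<le> pos_payoff c m x k" using deviation_le[OF i(1) k i(2)] by metis
    then show ?thesis using k' single by (simp add: pos_payoff_interior)
  qed
qed

end

section \<open>Sufficiency\<close>

text \<open>The assumptions are conditions (i)-(v) of the characterisation, verbatim.\<close>

locale ncne_conditions = two_position_profile +
  fixes c :: real
  assumes c_nonneg: "0 \<le> c"
    and multiplicities: "(\<forall>k\<in>{1..q}. nmult m x k \<le> 2) \<and> nmult m x 1 = 2 \<and> nmult m x q = 2"
    and equal_halves:
      "lenL m x q = Ip \<and> (\<forall>k. 1 < k \<and> k < q \<and> nmult m x k = 2 \<longrightarrow> lenL m x k = Ip \<and> lenR m x k = Ip)"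
    and extreme_halves: "lenL m x 1 = Ip + c / 2 \<and> lenR m x q = Ip + c / 2"
    and lone_electorates: "\<forall>i\<in>{1..q}. nmult m x i = 1 \<longrightarrow>
      (\<forall>k\<in>{1..q}. k \<noteq> 1 \<longrightarrow> lenL m x k \<le> lenI m x i) \<and> (\<forall>k\<in>{1..q}. k \<noteq> q \<longrightarrow> lenR m x k \<le> lenI m x i)"
    and halves_le_Ip: "\<forall>k\<in>{1..q}. (k \<noteq> 1 \<longrightarrow> lenL m x k \<le> Ip) \<and> (k \<noteq> q \<longrightarrow> lenR m x k \<le> Ip)"
begin

lemma mult_le_2: "1 \<le> k \<Longrightarrow> k \<le> q \<Longrightarrow> nmult m x k \<le> 2"
  using multiplicities by simp

lemma mult_first_eq_2: "nmult m x 1 = 2" and mult_last_eq_2: "nmult m x q = 2"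
  using multiplicities by simp_all

lemma last_left_eq: "lenL m x q = Ip"
  using equal_halves by simp

lemma shared_halves_eq: "1 < k \<Longrightarrow> k < q \<Longrightarrow> nmult m x k = 2 \<Longrightarrow> lenL m x k = Ip \<and> lenR m x k = Ip"
  using equal_halves by simp

lemma first_left_eq: "lenL m x 1 = Ip + c / 2" and last_right_eq: "lenR m x q = Ip + c / 2"
  using extreme_halves by simp_all

lemma single_ge: "1 \<le> k \<Longrightarrow> k \<le> q \<Longrightarrow> nmult m x k = 1 \<Longrightarrow> Ip \<le> lenI m x k"
  using lone_electorates two_le_npos by auto

lemma gap_le: "1 \<le> j \<Longrightarrow> j < q \<Longrightarrow> lenR m x j \<le> Ip"
  using halves_le_Ip by simp

lemma first_pos_eq: "pos m x 1 = Ip + c / 2"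
  using first_left_eq lenL_first[of m x] by simp

lemma last_pos_eq: "1 - pos m x q = Ip + c / 2"
  using last_right_eq lenR_last[of m x] by simp

lemma extremes_sum_eq_1: "pos m x 1 + pos m x q = 1"
  using first_pos_eq last_pos_eq by simp

lemma Ip_pos: "0 < Ip"
  using lenR_pos[of 1 m x] two_le_npos by simp

lemma pos_payoff_first: "pos_payoff c m x 1 = Ip"
  using first_left_eq extremes_sum_eq_1
  unfolding pos_payoff_def mult_first_eq_2 last_mass_first[OF two_le_npos] lenI_eq by simp

lemma pos_payoff_last: "pos_payoff c m x q = Ip"
  using last_right_eq last_left_eq extremes_sum_eq_1
  unfolding pos_payoff_def mult_last_eq_2 last_mass_last[OF two_le_npos] lenI_eq by simp

lemma single_interior:
  assumes "1 \<le> k" "k \<le> q" "nmult m x k = 1"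
  shows "1 < k" "k < q"
  using assms mult_first_eq_2 mult_last_eq_2 by (auto simp: le_less)

lemma pos_payoff_single: "1 \<le> k \<Longrightarrow> k \<le> q \<Longrightarrow> nmult m x k = 1 \<Longrightarrow> pos_payoff c m x k = lenI m x k"
  using single_interior by (simp add: pos_payoff_interior)

lemma Ip_le_pos_payoff:
  assumes "1 \<le> k" "k \<le> q"
  shows "Ip \<le> pos_payoff c m x k"
proof -
  consider "k = 1" | "k = q" | "1 < k" "k < q" "nmult m x k = 1" | "1 < k" "k < q" "nmult m x k = 2"
    using assms mult_le_2[OF assms] nmult_ge_1[OF assms] by linarith
  then show ?thesis
  proof cases
    case 3
    then show ?thesis using assms single_ge pos_payoff_single by simp
  next
    case 4
    then show ?thesis using shared_halves_eq[of k] by (simp add: pos_payoff_interior lenI_eq)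
  qed (use pos_payoff_first pos_payoff_last in auto)
qed

text \<open>A gap between neighbouring positions of the other candidates: either it is a gap of the
  profile, or it is the full electorate of a lone candidate who left it.\<close>

lemma half_gap_le_pos_payoff:
  assumes i: "i < m" "x i = pos m x k" and k: "1 \<le> k" "k \<le> q"
    and uw: "u \<in> others m x i" "w \<in> others m x i" "u < w"
    and nothing_between: "\<And>z. z \<in> others m x i \<Longrightarrow> \<not> (u < z \<and> z < w)"
  shows "(w - u) / 2 \<le> pos_payoff c m x k"
proof (cases "\<exists>z\<in>positions m x. u < z \<and> z < w")
  case False
  then obtain j where j: "1 \<le> j" "j < q" "u = pos m x j" "w = pos m x (j + 1)"
    using consecutive_positions[of u m x w] uw others_subset_positions by blast
  then have "(w - u) / 2 = lenR m x j" by (simp add: lenR_eq)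
  then show ?thesis using gap_le[OF j(1,2)] Ip_le_pos_payoff[OF k] by simp
next
  case True
  then obtain z where z: "z \<in> positions m x" "u < z" "z < w" by blast
  then have "z \<notin> others m x i" using nothing_between by blast
  then have zk: "z = pos m x k" using z(1) i by (auto simp: others_def positions_def)
  have single: "nmult m x k = 1"
    using \<open>z \<notin> others m x i\<close> zk pos_in_others[OF k, of i] nmult_ge_1[OF k] by fastforce
  note k' = single_interior[OF k single]
  have "pos m x (k - 1) \<in> others m x i" "pos m x (k + 1) \<in> others m x i"
    using k' by (auto intro!: pos_in_others_if_single[OF i single])
  then have "pos m x (k - 1) \<le> u" "w \<le> pos m x (k + 1)"
    using nothing_between z zk k' pos_less[of "k - 1" k m x] pos_less[of k "k + 1" m x] by force+
  moreover have "lenI m x k = (pos m x (k + 1) - pos m x (k - 1)) / 2"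
    using k' by (simp add: lenI_eq lenL_eq lenR_eq field_simps)
  ultimately show ?thesis using pos_payoff_single[OF k single] by simp
qed

lemma extremes_in_others: "pos m x 1 \<in> others m x i" "pos m x q \<in> others m x i"
  using two_le_npos mult_first_eq_2 mult_last_eq_2 by (simp_all add: pos_in_others)

lemma others_bounds: "z \<in> others m x i \<Longrightarrow> pos m x 1 \<le> z \<and> z \<le> pos m x q"
  using positions_bounds others_subset_positions by blast

lemma c_times_last_pos: "c * pos m x q = c - c * pos m x 1"
  using extremes_sum_eq_1 by (metis add_diff_cancel_left' mult.right_neutral right_diff_distrib)

text \<open>Outflanking earns at most x^1 - c/2 = I^p: only voters left of x^1 can rank the deviator first,
  and at least half of all voters rank her last.\<close>

lemma move_below_first_le:
  assumes i: "i < m" and t: "t \<in> {0..1}" "t < pos m x 1"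
  shows "payoff c m (x(i := t)) i \<le> Ip"
proof -
  have "payoff c m (x(i := t)) i = (t + pos m x 1) / 2 - c * (1 - (t + pos m x q) / 2)"
    by (rule payoff_move_below[OF profile i t(1) extremes_in_others]) (use others_bounds t in force)
  then have "2 * payoff c m (x(i := t)) i = t + pos m x 1 - 2 * c + c * t + c * pos m x q"
    by (simp add: field_simps)
  moreover have "c * t \<le> c * pos m x 1" using c_nonneg t by (intro mult_left_mono) auto
  ultimately show ?thesis using first_pos_eq c_times_last_pos t(2) by linarith
qed

lemma move_above_last_le:
  assumes i: "i < m" and t: "t \<in> {0..1}" "pos m x q < t"
  shows "payoff c m (x(i := t)) i \<le> Ip"
proof -
  have "payoff c m (x(i := t)) i = 1 - (pos m x q + t) / 2 - c * ((pos m x 1 + t) / 2)"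
    by (rule payoff_move_above[OF profile i t(1) extremes_in_others]) (use others_bounds t in force)
  then have "2 * payoff c m (x(i := t)) i = 2 - pos m x q - t - c * pos m x 1 - c * t"
    by (simp add: field_simps)
  moreover have "c * pos m x q \<le> c * t" using c_nonneg t by (intro mult_left_mono) auto
  ultimately show ?thesis using last_pos_eq c_times_last_pos t(2) by linarith
qed

lemma move_into_gap_le:
  assumes i: "i < m" "x i = pos m x k" and k: "1 \<le> k" "k \<le> q" and t: "t \<in> {0..1}"
    and inside: "pos m x 1 < t" "t < pos m x q" and new: "t \<notin> others m x i"
  shows "payoff c m (x(i := t)) i \<le> pos_payoff c m x k"
proof -
  obtain w where w: "w \<in> others m x i" "t < w" "\<And>z. z \<in> others m x i \<Longrightarrow> t < z \<Longrightarrow> w \<le> z"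
    using cell_hi_obtain[OF finite_others extremes_in_others(2) inside(2)] by blast
  obtain u where u: "u \<in> others m x i" "u < t" "\<And>z. z \<in> others m x i \<Longrightarrow> z < t \<Longrightarrow> z \<le> u"
    using cell_lo_obtain[OF finite_others extremes_in_others(1) inside(1)] by blast
  have nothing_between: "\<not> (u < z \<and> z < w)" if "z \<in> others m x i" for z
    using that u(3)[of z] w(3)[of z] new by (cases "z < t"; cases "t < z") auto
  have "payoff c m (x(i := t)) i = (w - u) / 2"
    by (rule payoff_move_between[OF profile i(1) t u(1) w(1) u(2) w(2) nothing_between])
  also have "\<dots> \<le> pos_payoff c m x k"
    using half_gap_le_pos_payoff[OF i k u(1) w(1) _ nothing_between] u(2) w(2) by simp
  finally show ?thesis .
qed

lemma Min_others: "Min (others m x i) = pos m x 1"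
  using finite_others extremes_in_others others_bounds by (intro Min_eqI) auto

lemma Max_others: "Max (others m x i) = pos m x q"
  using finite_others extremes_in_others others_bounds by (intro Max_eqI) auto

lemma cell_hi_others_le:
  assumes i: "i < m" "x i = pos m x k" and k: "1 \<le> k" "k \<le> q" and occupied: "t \<in> others m x i"
    and "t < pos m x q"
  shows "0 \<le> cell_hi (others m x i) t - t" "cell_hi (others m x i) t - t \<le> pos_payoff c m x k"
proof -
  obtain w where w: "w \<in> others m x i" "t < w" "\<And>z. z \<in> others m x i \<Longrightarrow> t < z \<Longrightarrow> w \<le> z"
    "cell_hi (others m x i) t = (t + w) / 2"
    using cell_hi_obtain[OF finite_others extremes_in_others(2) assms(6)] by blast
  have "(w - t) / 2 \<le> pos_payoff c m x k"
    using half_gap_le_pos_payoff[OF i k occupied w(1,2)] w(3) by force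
  then show "0 \<le> cell_hi (others m x i) t - t" "cell_hi (others m x i) t - t \<le> pos_payoff c m x k"
    using w(2,4) by simp_all
qed

lemma cell_lo_others_le:
  assumes i: "i < m" "x i = pos m x k" and k: "1 \<le> k" "k \<le> q" and occupied: "t \<in> others m x i"
    and "pos m x 1 < t"
  shows "0 \<le> t - cell_lo (others m x i) t" "t - cell_lo (others m x i) t \<le> pos_payoff c m x k"
proof -
  obtain u where u: "u \<in> others m x i" "u < t" "\<And>z. z \<in> others m x i \<Longrightarrow> z < t \<Longrightarrow> z \<le> u"
    "cell_lo (others m x i) t = (u + t) / 2"
    using cell_lo_obtain[OF finite_others extremes_in_others(1) assms(6)] by blast
  have "(t - u) / 2 \<le> pos_payoff c m x k"
    using half_gap_le_pos_payoff[OF i k u(1) occupied u(2)] u(3) by force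
  then show "0 \<le> t - cell_lo (others m x i) t" "t - cell_lo (others m x i) t \<le> pos_payoff c m x k"
    using u(2,4) by simp_all
qed

text \<open>The share splits into the two half-cells around t; at an extreme position the outer one, less
  the voters ranking t last, is exactly I^p.\<close>

lemma occupied_share_le:
  assumes i: "i < m" "x i = pos m x k" and k: "1 \<le> k" "k \<le> q" and occupied: "t \<in> others m x i"
  shows "0 \<le> cell_hi (others m x i) t - cell_lo (others m x i) t - c * last_mass (others m x i) t
    \<and> cell_hi (others m x i) t - cell_lo (others m x i) t - c * last_mass (others m x i) t
      \<le> 2 * pos_payoff c m x k"
proof -
  let ?O = "others m x i"
  note hi = cell_hi_others_le[OF i k occupied] and lo = cell_lo_others_le[OF i k occupied]
  have Ip: "0 \<le> Ip" "Ip \<le> pos_payoff c m x k" using Ip_pos Ip_le_pos_payoff[OF k] by simp_all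
  have "pos m x 1 \<le> t" "t \<le> pos m x q" using others_bounds occupied by auto
  then consider "t = pos m x 1" | "t = pos m x q" | "pos m x 1 < t" "t < pos m x q" by linarith
  then show ?thesis
  proof cases
    case 1
    have "cell_lo ?O t = 0" by (rule cell_lo_eq_0) (use 1 others_bounds in auto)
    moreover have "last_mass ?O t = 1 / 2"
      using 1 extremes_sum_eq_1 by (simp add: last_mass_def Min_others Max_others)
    ultimately have "cell_hi ?O t - cell_lo ?O t - c * last_mass ?O t = (cell_hi ?O t - t) + Ip"
      using 1 first_pos_eq by simp
    moreover have "t < pos m x q" using 1 pos_first_less_last by simp
    ultimately show ?thesis using two_parts_le[OF hi(1) Ip(1) hi(2) Ip(2)] by simp
  next
    case 2
    have hi_eq: "cell_hi ?O t = 1" by (rule cell_hi_eq_1) (use 2 others_bounds in auto)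
    have mass: "last_mass ?O t = 1 / 2"
      using 2 extremes_sum_eq_1 pos_first_less_last by (simp add: last_mass_def Min_others Max_others)
    have "cell_hi ?O t - cell_lo ?O t - c * last_mass ?O t = Ip + (t - cell_lo ?O t)"
      unfolding hi_eq mass using 2 last_pos_eq by simp
    moreover have "pos m x 1 < t" using 2 pos_first_less_last by simp
    ultimately show ?thesis using two_parts_le[OF Ip(1) lo(1) Ip(2) lo(2)] by simp
  next
    case 3
    then have "last_mass ?O t = 0" by (simp add: last_mass_def Min_others Max_others)
    then show ?thesis
      using two_parts_le[OF hi(1)[OF 3(2)] lo(1)[OF 3(1)] hi(2)[OF 3(2)] lo(2)[OF 3(1)]] by simp
  qed
qed

lemma move_onto_other_le:
  assumes i: "i < m" "x i = pos m x k" and k: "1 \<le> k" "k \<le> q" and t: "t \<in> {0..1}"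
    and occupied: "t \<in> others m x i"
  shows "payoff c m (x(i := t)) i \<le> pos_payoff c m x k"
proof -
  have "Min (others m x i) < Max (others m x i)"
    using pos_first_less_last by (simp add: Min_others Max_others)
  then show ?thesis
    using payoff_move_onto_other_le[OF profile i(1) t occupied] occupied_share_le[OF i k occupied]
    by fastforce
qed

lemma is_equilibrium: "is_NE c m x"
  unfolding is_NE_def
proof (intro conjI profile allI impI ballI)
  fix i and t :: real assume i: "i < m" and t: "t \<in> {0..1}"
  obtain k where k: "1 \<le> k" "k \<le> q" "x i = pos m x k"
    using positions_obtain_pos[of "x i" m x] i by (auto simp: positions_def)
  have "payoff c m (x(i := t)) i \<le> pos_payoff c m x k"
  proof -
    consider "t < pos m x 1" | "pos m x q < t" | "t \<in> others m x i"
      | "pos m x 1 < t" "t < pos m x q" "t \<notin> others m x i"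
      using extremes_in_others[of i] by (metis linorder_neqE_linordered_idom)
    then show ?thesis
    proof cases
      case 1
      then show ?thesis using move_below_first_le[OF i t] Ip_le_pos_payoff[OF k(1,2)] by simp
    next
      case 2
      then show ?thesis using move_above_last_le[OF i t] Ip_le_pos_payoff[OF k(1,2)] by simp
    next
      case 3
      then show ?thesis by (rule move_onto_other_le[OF i k(3) k(1,2) t])
    next
      case 4
      then show ?thesis by (rule move_into_gap_le[OF i k(3) k(1,2) t])
    qed
  qed
  then show "payoff c m (x(i := t)) i \<le> payoff c m x i"
    using payoff_at_pos[OF profile two_le_npos i k] by simp
qed

end

lemma (in bw_equilibrium) satisfies_ncne_conditions: "ncne_conditions m x c"
proof (rule ncne_conditions.intro[OF two_position_profile_axioms],
    unfold ncne_conditions_axioms_def, intro conjI ballI allI impI)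
  show "0 \<le> c" by (rule c_nonneg)
  show "nmult m x k \<le> 2" if k: "k \<in> {1..q}" for k
  proof (cases "k = 1 \<or> k = q")
    case True
    then show ?thesis using first_position_balanced last_position_balanced by auto
  next
    case False
    then show ?thesis using k interior_shared_position[of k] by (cases "2 \<le> nmult m x k") auto
  qed
  show "nmult m x 1 = 2" "nmult m x q = 2"
    using first_position_balanced last_position_balanced by simp_all
  show "lenL m x q = Ip" by (rule lenL_last_eq_Ip)
  show "lenL m x k = Ip" "lenR m x k = Ip" if "1 < k \<and> k < q \<and> nmult m x k = 2" for k
    using that interior_shared_position[of k] by simp_all
  show "lenL m x 1 = Ip + c / 2" "lenR m x q = Ip + c / 2" by (rule lenL_first_eq, rule lenR_last_eq)
  show "lenL m x k \<le> lenI m x i" if "i \<in> {1..q}" "nmult m x i = 1" "k \<in> {1..q}" "k \<noteq> 1" for i k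
  proof -
    have "1 < k" "k \<le> q" using that by auto
    then show ?thesis using that lenR_le_lenI_if_single[of i "k - 1"] lenL_eq_lenR_pred[of k m x] by simp
  qed
  show "lenR m x k \<le> lenI m x i" if "i \<in> {1..q}" "nmult m x i = 1" "k \<in> {1..q}" "k \<noteq> q" for i k
    using that lenR_le_lenI_if_single[of i k] by simp
  show "lenL m x k \<le> Ip" if "k \<in> {1..q}" "k \<noteq> 1" for k
  proof -
    have "1 < k" "k \<le> q" using that by auto
    then show ?thesis using lenR_le_Ip[of "k - 1"] lenL_eq_lenR_pred[of k m x] by simp
  qed
  show "lenR m x k \<le> Ip" if "k \<in> {1..q}" "k \<noteq> q" for k
    using that lenR_le_Ip[of k] by simp
qed

theorem theorem1:
  fixes c :: real and m :: nat and x :: "nat \<Rightarrow> real"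
  assumes "m \<ge> 2" and "0 \<le> c" and "c < 1"
    and "is_profile m x"
    and "npos m x \<ge> 2"
  shows "is_NCNE c m x \<longleftrightarrow>
    (let q = npos m x; Ip = lenR m x 1 in
      ((\<forall>k\<in>{1..q}. nmult m x k \<le> 2) \<and> nmult m x 1 = 2 \<and> nmult m x q = 2) \<and>
      (lenL m x q = Ip \<and>
        (\<forall>k. 1 < k \<and> k < q \<and> nmult m x k = 2 \<longrightarrow> lenL m x k = Ip \<and> lenR m x k = Ip)) \<and>
      (lenL m x 1 = Ip + c / 2 \<and> lenR m x q = Ip + c / 2) \<and>
      (\<forall>i\<in>{1..q}. nmult m x i = 1 \<longrightarrow>
          (\<forall>k\<in>{1..q}. k \<noteq> 1 \<longrightarrow> lenL m x k \<le> lenI m x i) \<and>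
          (\<forall>k\<in>{1..q}. k \<noteq> q \<longrightarrow> lenR m x k \<le> lenI m x i)) \<and>
      (\<forall>k\<in>{1..q}. (k \<noteq> 1 \<longrightarrow> lenL m x k \<le> Ip) \<and> (k \<noteq> q \<longrightarrow> lenR m x k \<le> Ip)))"
proof -
  interpret two_position_profile m x by unfold_locales (use assms in auto)
  have "is_NCNE c m x \<longleftrightarrow> is_NE c m x" by (rule is_NCNE_iff_is_NE)
  also have "\<dots> \<longleftrightarrow> ncne_conditions m x c"
  proof
    assume "is_NE c m x"
    then interpret bw_equilibrium m x c by unfold_locales (use assms in auto)
    show "ncne_conditions m x c" by (rule satisfies_ncne_conditions)
  next
    assume "ncne_conditions m x c"
    then interpret ncne_conditions m x c .
    show "is_NE c m x" by (rule is_equilibrium)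
  qed
  finally show ?thesis
    unfolding ncne_conditions_def ncne_conditions_axioms_def Let_def
    using two_position_profile_axioms assms(2) by simp
qed

end
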